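(* Let $F$ and $G$ be experiments on the state space $\Theta=\{\theta_0,\ldots,\theta_n\}$. Then $F\succeq_{\textup{LB}}G$ if and only if $\mathcal{Z}(F)\supseteq\mathcal{Z}(G)$.
   Context: States: $\Theta=\{\theta_0,\ldots,\theta_n\}\subset\mathbb{R}$. An experiment $F$ specifies, for each $\theta$, an absolutely continuous distribution $F(\cdot\mid\theta)$ with density $f(\cdot\mid\theta)$ of a signal $X$ in a compact interval $\mathcal{X}$; likewise $G$ with densities $g(\cdot\mid\theta)$ on a compact interval $\mathcal{Y}$. Let $\widehat{\Delta}_n=\{\boldsymbol{q}\in[0,1]^n:\sum_iq_i\le1\}$; prior $\boldsymbol{q}$ puts mass $q_i$ on $\theta_i$ ($i\ge1$), $q_0=1-\sum_iq_i$ on $\theta_0$. Posterior $p_{F,i}(x;\boldsymbol{q})=q_if(x\mid\theta_i)/\sum_jq_jf(x\mid\theta_j)$, $\boldsymbol{p}_F(\boldsymbol{q})=(p_{F,1},\ldots,p_{F,n})(X;\boldsymbol{q})$ with $X\sim\sum_jq_jF(\cdot\mid\theta_j)$ (analogously for $G$). $\boldsymbol{\mu}\succeq_{\textup{lcx}}\boldsymbol{\nu}$ means $\mathbb{E}[C(\boldsymbol{b}\cdot\boldsymbol{\mu})]\ge\mathbb{E}[C(\boldsymbol{b}\cdot\boldsymbol{\nu})]$ for all $\boldsymbol{b}\in\mathbb{R}^n$ and all convex $C:\mathbb{R}\to\mathbb{R}$. $F\succeq_{\textup{LB}}G$ means $\boldsymbol{p}_F(\boldsymbol{q})\succeq_{\textup{lcx}}\boldsymbol{p}_G(\boldsymbol{q})$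 for all $\boldsymbol{q}\in\widehat{\Delta}_n$. Lorenz zonoid: let $\mathcal{H}_F$ be the set of Borel-measurable $h:\mathcal{X}\to[0,1]$, $\boldsymbol{z}_F(h)=\big(\int_{\mathcal{X}}h\,dF(\cdot\mid\theta_0),\ldots,\int_{\mathcal{X}}h\,dF(\cdot\mid\theta_n)\big)\in[0,1]^{n+1}$, and $\mathcal{Z}(F)=\{\boldsymbol{z}_F(h):h\in\mathcal{H}_F\}$; $\mathcal{Z}(G)$ is defined analogously. *)

theory Defs
  imports "HOL-Analysis.Analysis"
begin

text \<open>States are indexed 0..n. An experiment on the compact interval [a,b] is given by
  densities f i (i = 0..n) with respect to Lebesgue measure on [a,b].\<close>

definition is_experiment :: "nat \<Rightarrow> real \<Rightarrow> real \<Rightarrow> (nat \<Rightarrow> real \<Rightarrow> real) \<Rightarrow> bool" where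
  "is_experiment n a b f \<longleftrightarrow> a \<le> b \<and>
     (\<forall>i\<le>n. f i \<in> borel_measurable lborel \<and> (\<forall>x\<in>{a..b}. 0 \<le> f i x) \<and>
        set_integrable lborel {a..b} (f i) \<and> (LINT x:{a..b}|lborel. f i x) = 1)"

text \<open>Priors: q restricted to indices 1..n ranges over the set hat-Delta_n.\<close>
definition prior_set :: "nat \<Rightarrow> (nat \<Rightarrow> real) set" where
  "prior_set n = {q. (\<forall>i\<in>{1..n}. 0 \<le> q i \<and> q i \<le> 1) \<and> (\<Sum>i=1..n. q i) \<le> 1}"

definition prior :: "nat \<Rightarrow> (nat \<Rightarrow> real) \<Rightarrow> nat \<Rightarrow> real" where
  "prior n q i = (if i = 0 then 1 - (\<Sum>j=1..n. q j) else q i)"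

definition mix :: "nat \<Rightarrow> (nat \<Rightarrow> real \<Rightarrow> real) \<Rightarrow> (nat \<Rightarrow> real) \<Rightarrow> real \<Rightarrow> real" where
  "mix n f q x = (\<Sum>j=0..n. prior n q j * f j x)"

definition posterior :: "nat \<Rightarrow> (nat \<Rightarrow> real \<Rightarrow> real) \<Rightarrow> (nat \<Rightarrow> real) \<Rightarrow> nat \<Rightarrow> real \<Rightarrow> real" where
  "posterior n f q i x = prior n q i * f i x / mix n f q x"

text \<open>E[C(b . p_F(q))] where X has the mixture distribution on [a,b].\<close>
definition lcx_expect ::
  "nat \<Rightarrow> real \<Rightarrow> real \<Rightarrow> (nat \<Rightarrow> real \<Rightarrow> real) \<Rightarrow> (nat \<Rightarrow> real) \<Rightarrow> (nat \<Rightarrow> real) \<Rightarrow> (real \<Rightarrow> real) \<Rightarrow> real" where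
  "lcx_expect n a b f q \<beta> C =
     (LINT x:{a..b}|lborel. C (\<Sum>i=1..n. \<beta> i * posterior n f q i x) * mix n f q x)"

definition LB_ge ::
  "nat \<Rightarrow> real \<Rightarrow> real \<Rightarrow> (nat \<Rightarrow> real \<Rightarrow> real) \<Rightarrow> real \<Rightarrow> real \<Rightarrow> (nat \<Rightarrow> real \<Rightarrow> real) \<Rightarrow> bool" where
  "LB_ge n a b f c d g \<longleftrightarrow>
     (\<forall>q\<in>prior_set n. \<forall>\<beta>::nat \<Rightarrow> real. \<forall>C::real \<Rightarrow> real. convex_on UNIV C \<longrightarrow>
        lcx_expect n a b f q \<beta> C \<ge> lcx_expect n c d g q \<beta> C)"

text \<open>Lorenz zonoid, points of [0,1]^(n+1) represented as lists of length n+1.\<close>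
definition lorenz_zonoid :: "nat \<Rightarrow> real \<Rightarrow> real \<Rightarrow> (nat \<Rightarrow> real \<Rightarrow> real) \<Rightarrow> real list set" where
  "lorenz_zonoid n a b f =
     {map (\<lambda>i. LINT x:{a..b}|lborel. h x * f i x) [0..<Suc n] | h.
        h \<in> borel_measurable lborel \<and> (\<forall>x\<in>{a..b}. 0 \<le> h x \<and> h x \<le> 1)}"

end

theory Submission
  imports Defs
begin

text \<open>Both orders are compared through the support function
  \<open>\<sigma>\<^sub>F(w) = \<integral> max 0 (\<Sum>\<^sub>j w\<^sub>j f\<^sub>j)\<close> of the Lorenz zonoid.

  \<open>\<sigma>\<^sub>F(w)\<close> is the maximum of \<open>w \<cdot> z\<close> over \<open>\<Z>(F)\<close>, attained by the indicator of
  \<open>{\<Sum>\<^sub>j w\<^sub>j f\<^sub>j > 0}\<close>. Conversely, a point \<open>z\<close> below \<open>\<sigma>\<^sub>F\<close> lies in \<open>\<Z>(F)\<close>: there is a nearest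
  point of \<open>\<Z>(F)\<close> to \<open>z\<close> (among test functions whose Lorenz points are almost nearest, those of
  almost minimal \<open>L\<^sup>2\<close> norm form an \<open>L\<^sup>2\<close>-Cauchy sequence by the parallelogram law, and a subsequence
  converges a.e.), and its first-order condition against the support point in direction \<open>z - p\<close>
  forces \<open>p = z\<close>. Hence \<open>\<Z>(G) \<subseteq> \<Z>(F)\<close> iff \<open>\<sigma>\<^sub>G \<le> \<sigma>\<^sub>F\<close>.

  The hinge \<open>t \<mapsto> max 0 (t - s)\<close> composed with \<open>\<beta> \<cdot> p\<^sub>F(q)\<close> has expectation \<open>\<sigma>\<^sub>F\<close> at the weights
  \<open>q\<^sub>j (\<beta>\<^sub>j - s)\<close> (with \<open>\<beta>\<^sub>0 = 0\<close>), which cover every direction as \<open>q\<close>, \<open>\<beta>\<close>, \<open>s\<close> vary. Conversely,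
  on a compact interval every convex function is uniformly close to an affine function plus a
  nonnegative combination of hinges, and affine functions have the same expectation under \<open>F\<close>
  and \<open>G\<close>. Hence \<open>F \<succeq>\<^sub>L\<^sub>B G\<close> iff \<open>\<sigma>\<^sub>G \<le> \<sigma>\<^sub>F\<close>.\<close>

lemma set_integrable_sum:
  fixes f :: "'i \<Rightarrow> 'a \<Rightarrow> real"
  assumes "\<And>i. i \<in> I \<Longrightarrow> set_integrable M A (f i)"
  shows "set_integrable M A (\<lambda>x. \<Sum>i\<in>I. f i x)"
  using assms unfolding set_integrable_def scaleR_sum_right by (rule Bochner_Integration.integrable_sum)

lemma set_integral_sum:
  fixes f :: "'i \<Rightarrow> 'a \<Rightarrow> real"
  assumes "\<And>i. i \<in> I \<Longrightarrow> set_integrable M A (f i)"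
  shows "(LINT x:A|M. (\<Sum>i\<in>I. f i x)) = (\<Sum>i\<in>I. LINT x:A|M. f i x)"
  using assms unfolding set_integrable_def set_lebesgue_integral_def scaleR_sum_right
  by (rule Bochner_Integration.integral_sum)

lemma set_integrable_dominated:
  fixes g v :: "'a \<Rightarrow> real"
  assumes "set_integrable M A g" "v \<in> borel_measurable M" "A \<in> sets M"
    and "\<And>x. x \<in> A \<Longrightarrow> \<bar>v x\<bar> \<le> K * g x"
  shows "set_integrable M A v"
proof (rule set_integrable_bound[where f="\<lambda>x. K * g x"])
  show "set_integrable M A (\<lambda>x. K * g x)"
    using assms(1) by simp
  show "set_borel_measurable M A v"
    using assms(2,3) unfolding set_borel_measurable_def by measurable
  show "AE x in M. x \<in> A \<longrightarrow> norm (v x) \<le> norm (K * g x)"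
    using assms(4) by (intro AE_I2) force
qed

lemma set_integrable_bounded_Icc:
  fixes h :: "real \<Rightarrow> real"
  assumes "h \<in> borel_measurable lborel" "\<And>x. x \<in> {a..b} \<Longrightarrow> \<bar>h x\<bar> \<le> K"
  shows "set_integrable lborel {a..b} h"
proof (rule set_integrable_dominated[where g="\<lambda>_. 1" and K=K])
  show "set_integrable lborel {a..b} (\<lambda>_. 1::real)"
    by (rule borel_integrable_atLeastAtMost') (rule continuous_on_const)
qed (use assms in auto)

lemma set_integral_const_Icc:
  fixes a b c :: real
  shows "(LINT x:{a..b}|lborel. c) = c * measure lborel {a..b}"
  using set_integral_const[of "{a..b}" lborel c] by (simp add: emeasure_lborel_Icc_eq mult.commute)

definition test_functions :: "(real \<Rightarrow> real) set" where
  "test_functions = {h \<in> borel_measurable lborel. \<forall>x. 0 \<le> h x \<and> h x \<le> 1}"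

lemma test_functionsD:
  assumes "h \<in> test_functions"
  shows "h \<in> borel_measurable lborel" "0 \<le> h x" "h x \<le> 1" "\<bar>h x\<bar> \<le> 1"
  using assms unfolding test_functions_def by auto

lemma test_functions_convex_comb:
  assumes "h1 \<in> test_functions" "h2 \<in> test_functions" "0 \<le> t" "t \<le> 1"
  shows "(\<lambda>x. (1 - t) * h1 x + t * h2 x) \<in> test_functions"
proof -
  have "(1 - t) * h1 x + t * h2 x \<le> (1 - t) * 1 + t * 1" for x
    using assms by (intro add_mono mult_left_mono) (auto dest: test_functionsD)
  then show ?thesis
    using assms test_functionsD[OF assms(1)] test_functionsD[OF assms(2)]
    unfolding test_functions_def by auto
qed

lemma test_functions_midpoint:
  assumes "h1 \<in> test_functions" "h2 \<in> test_functions"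
  shows "(\<lambda>x. (h1 x + h2 x) / 2) \<in> test_functions"
  using test_functions_convex_comb[OF assms, of "1/2"] by (simp add: field_simps)

definition L2_sqnorm :: "real \<Rightarrow> real \<Rightarrow> (real \<Rightarrow> real) \<Rightarrow> real" where
  "L2_sqnorm a b u = (LINT x:{a..b}|lborel. (u x)\<^sup>2)"

lemma set_integrable_test_function_mult:
  assumes "h1 \<in> test_functions" "h2 \<in> test_functions"
  shows "set_integrable lborel {a..b} (\<lambda>x. h1 x * h2 x)"
proof (rule set_integrable_bounded_Icc[where K=1])
  show "(\<lambda>x. h1 x * h2 x) \<in> borel_measurable lborel"
    using test_functionsD(1)[OF assms(1)] test_functionsD(1)[OF assms(2)] by measurable
  show "\<bar>h1 x * h2 x\<bar> \<le> 1" for x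
    using test_functionsD(4)[OF assms(1)] test_functionsD(4)[OF assms(2)]
    by (simp add: abs_mult mult_le_one)
qed

lemma L2_sqnorm_bounds:
  assumes "h \<in> test_functions"
  shows "0 \<le> L2_sqnorm a b h" "L2_sqnorm a b h \<le> measure lborel {a..b}"
proof -
  show "0 \<le> L2_sqnorm a b h"
    unfolding L2_sqnorm_def set_lebesgue_integral_def
    by (rule Bochner_Integration.integral_nonneg) simp
  have "L2_sqnorm a b h \<le> (LINT x:{a..b}|lborel. 1)"
    unfolding L2_sqnorm_def
    by (rule set_integral_mono)
      (use set_integrable_test_function_mult[OF assms assms]
        set_integrable_bounded_Icc[of "\<lambda>_. 1" a b 1] assms
        in \<open>auto simp: power2_eq_square dest: test_functionsD intro: mult_le_one\<close>)
  then show "L2_sqnorm a b h \<le> measure lborel {a..b}"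
    by (simp add: set_integral_const_Icc)
qed

lemma L2_sqnorm_parallelogram:
  assumes "h1 \<in> test_functions" "h2 \<in> test_functions"
  shows "L2_sqnorm a b (\<lambda>x. h1 x - h2 x)
    = 2 * L2_sqnorm a b h1 + 2 * L2_sqnorm a b h2 - 4 * L2_sqnorm a b (\<lambda>x. (h1 x + h2 x) / 2)"
proof -
  let ?I12 = "LINT x:{a..b}|lborel. h1 x * h2 x"
  have int: "set_integrable lborel {a..b} (\<lambda>x. (h1 x)\<^sup>2)"
    "set_integrable lborel {a..b} (\<lambda>x. (h2 x)\<^sup>2)"
    "set_integrable lborel {a..b} (\<lambda>x. h1 x * h2 x)"
    using set_integrable_test_function_mult[OF assms(1) assms(1)]
      set_integrable_test_function_mult[OF assms(2) assms(2)]
      set_integrable_test_function_mult[OF assms(1) assms(2)]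
    by (simp_all add: power2_eq_square)
  have "L2_sqnorm a b (\<lambda>x. h1 x - h2 x)
      = (LINT x:{a..b}|lborel. (h1 x)\<^sup>2 + (h2 x)\<^sup>2 - 2 * (h1 x * h2 x))"
    unfolding L2_sqnorm_def by (simp add: power2_eq_square algebra_simps)
  also have "\<dots> = L2_sqnorm a b h1 + L2_sqnorm a b h2 - 2 * ?I12"
    unfolding L2_sqnorm_def using int by simp
  finally have diff: "L2_sqnorm a b (\<lambda>x. h1 x - h2 x) = L2_sqnorm a b h1 + L2_sqnorm a b h2 - 2 * ?I12" .
  have "L2_sqnorm a b (\<lambda>x. (h1 x + h2 x) / 2)
      = (LINT x:{a..b}|lborel. (1/4) * (h1 x)\<^sup>2 + (1/4) * (h2 x)\<^sup>2 + (1/2) * (h1 x * h2 x))"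
    unfolding L2_sqnorm_def by (simp add: power2_eq_square field_simps)
  also have "\<dots> = (1/4) * L2_sqnorm a b h1 + (1/4) * L2_sqnorm a b h2 + (1/2) * ?I12"
    unfolding L2_sqnorm_def using int by simp
  finally have mid: "L2_sqnorm a b (\<lambda>x. (h1 x + h2 x) / 2)
      = (1/4) * L2_sqnorm a b h1 + (1/4) * L2_sqnorm a b h2 + (1/2) * ?I12" .
  show ?thesis
    unfolding diff mid by (simp add: algebra_simps)
qed

text \<open>AM-GM pointwise: \<open>\<bar>u\<bar> \<le> u\<^sup>2 / (2 \<epsilon>) + \<epsilon> / 2\<close>.\<close>
lemma set_integral_abs_le_L2_sqnorm:
  fixes u :: "real \<Rightarrow> real"
  assumes u: "u \<in> borel_measurable lborel" "\<And>x. \<bar>u x\<bar> \<le> 1" and \<epsilon>: "\<epsilon> > 0"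
  shows "(LINT x:{a..b}|lborel. \<bar>u x\<bar>)
    \<le> L2_sqnorm a b u / (2 * \<epsilon>) + \<epsilon> / 2 * measure lborel {a..b}"
proof -
  have int_abs: "set_integrable lborel {a..b} (\<lambda>x. \<bar>u x\<bar>)"
    using u by (intro set_integrable_bounded_Icc[where K=1]) auto
  have int_sq: "set_integrable lborel {a..b} (\<lambda>x. (u x)\<^sup>2)"
    using u by (intro set_integrable_bounded_Icc[where K=1]) (auto simp: abs_square_le_1)
  have int_const: "set_integrable lborel {a..b} (\<lambda>_. \<epsilon> / 2)"
    by (rule set_integrable_bounded_Icc[where K="\<epsilon> / 2"]) (use \<epsilon> in auto)
  have "(LINT x:{a..b}|lborel. \<bar>u x\<bar>) \<le> (LINT x:{a..b}|lborel. (u x)\<^sup>2 / (2 * \<epsilon>) + \<epsilon> / 2)"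
  proof (rule set_integral_mono[OF int_abs])
    show "set_integrable lborel {a..b} (\<lambda>x. (u x)\<^sup>2 / (2 * \<epsilon>) + \<epsilon> / 2)"
      using int_sq int_const by (intro set_integral_add(1)) auto
    fix x
    have "2 * \<epsilon> * \<bar>u x\<bar> \<le> (u x)\<^sup>2 + \<epsilon>\<^sup>2"
      using sum_squares_bound[of "\<bar>u x\<bar>" \<epsilon>] by (simp add: algebra_simps)
    then show "\<bar>u x\<bar> \<le> (u x)\<^sup>2 / (2 * \<epsilon>) + \<epsilon> / 2"
      using \<epsilon> by (simp add: field_simps power2_eq_square)
  qed
  also have "\<dots> = L2_sqnorm a b u / (2 * \<epsilon>) + \<epsilon> / 2 * measure lborel {a..b}"
    unfolding L2_sqnorm_def using int_sq int_const
    by (simp add: set_integral_const_Icc)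
  finally show ?thesis .
qed

lemma L2_Cauchy_imp_L1_Cauchy:
  fixes hs :: "nat \<Rightarrow> real \<Rightarrow> real"
  assumes hs: "\<And>k. hs k \<in> test_functions"
    and Cauchy: "\<And>e. e > 0 \<Longrightarrow> \<exists>N. \<forall>j\<ge>N. \<forall>k\<ge>N. L2_sqnorm a b (\<lambda>x. hs j x - hs k x) < e"
    and e: "e > 0"
  shows "\<exists>N. \<forall>j\<ge>N. \<forall>k\<ge>N. (LINT x:{a..b}|lborel. \<bar>hs j x - hs k x\<bar>) < e"
proof -
  define K where "K = measure lborel {a..b}"
  define \<epsilon> where "\<epsilon> = e / (2 * (K + 1))"
  have K: "0 \<le> K" unfolding K_def by simp
  have \<epsilon>: "\<epsilon> > 0" "\<epsilon> * K \<le> e"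
    unfolding \<epsilon>_def using e K by (auto simp: field_simps)
  obtain N where N: "\<And>j k. N \<le> j \<Longrightarrow> N \<le> k \<Longrightarrow> L2_sqnorm a b (\<lambda>x. hs j x - hs k x) < e * \<epsilon>"
    using Cauchy[of "e * \<epsilon>"] e \<epsilon> by auto
  have "(LINT x:{a..b}|lborel. \<bar>hs j x - hs k x\<bar>) < e" if "N \<le> j" "N \<le> k" for j k
  proof -
    have "(LINT x:{a..b}|lborel. \<bar>hs j x - hs k x\<bar>)
        \<le> L2_sqnorm a b (\<lambda>x. hs j x - hs k x) / (2 * \<epsilon>) + \<epsilon> / 2 * K"
      unfolding K_def
    proof (rule set_integral_abs_le_L2_sqnorm[OF _ _ \<epsilon>(1)])
      show "(\<lambda>x. hs j x - hs k x) \<in> borel_measurable lborel"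
        using test_functionsD(1)[OF hs[of j]] test_functionsD(1)[OF hs[of k]] by measurable
      show "\<bar>hs j x - hs k x\<bar> \<le> 1" for x
        using test_functionsD(2,3)[OF hs[of j], where x=x] test_functionsD(2,3)[OF hs[of k], where x=x]
        by (simp add: abs_le_iff)
    qed
    also have "\<dots> < e / 2 + e / 2"
      using N[OF that] \<epsilon> by (intro add_less_le_mono) (simp_all add: field_simps)
    finally show ?thesis by simp
  qed
  then show ?thesis by blast
qed

lemma test_functions_L1_Cauchy_AE_subseq:
  fixes hs :: "nat \<Rightarrow> real \<Rightarrow> real"
  assumes hs: "\<And>k. hs k \<in> test_functions"
    and Cauchy: "\<And>e. e > 0 \<Longrightarrow> \<exists>N. \<forall>j\<ge>N. \<forall>k\<ge>N. (LINT x:{a..b}|lborel. \<bar>hs j x - hs k x\<bar>) < e"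
  obtains r h where "strict_mono r" "h \<in> test_functions"
    "AE x in lborel. x \<in> {a..b} \<longrightarrow> (\<lambda>i. hs (r i) x) \<longlonglongrightarrow> h x"
proof -
  define s where "s k x = indicator {a..b} x * hs k x" for k x
  have [measurable]: "hs k \<in> borel_measurable lborel" for k
    using test_functionsD(1)[OF hs] .
  have int: "integrable lborel (s k)" for k
    using set_integrable_bounded_Icc[of "hs k" a b 1] test_functionsD(4)[OF hs]
    unfolding set_integrable_def s_def by simp
  have L1_Cauchy: "\<exists>N. \<forall>j\<ge>N. \<forall>k\<ge>N. (LINT x|lborel. norm (s j x - s k x)) < e" if "e > 0" for e
  proof -
    have "(LINT x|lborel. norm (s j x - s k x)) = (LINT x:{a..b}|lborel. \<bar>hs j x - hs k x\<bar>)" for j k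
      unfolding set_lebesgue_integral_def s_def
      by (intro Bochner_Integration.integral_cong) (auto simp: indicator_def)
    then show ?thesis
      using Cauchy[OF that] by simp
  qed
  obtain r where r: "strict_mono r" and AE: "AE x in lborel. Cauchy (\<lambda>i. s (r i) x)"
    using cauchy_L1_AE_cauchy_subseq[where M=lborel and s=s, OF int L1_Cauchy] by blast
  define h where "h x = max 0 (min 1 (lim (\<lambda>i. s (r i) x)))" for x
  have "h \<in> borel_measurable lborel"
    unfolding h_def s_def by measurable
  then have "h \<in> test_functions"
    unfolding test_functions_def h_def by auto
  moreover have "AE x in lborel. x \<in> {a..b} \<longrightarrow> (\<lambda>i. hs (r i) x) \<longlonglongrightarrow> h x"
    using AE
  proof (rule eventually_mono, intro impI)
    fix x assume "Cauchy (\<lambda>i. s (r i) x)" and x: "x \<in> {a..b}"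
    then have lim: "(\<lambda>i. hs (r i) x) \<longlonglongrightarrow> lim (\<lambda>i. s (r i) x)"
      by (simp add: s_def Cauchy_convergent_iff convergent_LIMSEQ_iff)
    have "0 \<le> lim (\<lambda>i. s (r i) x)" "lim (\<lambda>i. s (r i) x) \<le> 1"
      using LIMSEQ_le_const[OF lim] LIMSEQ_le_const2[OF lim] test_functionsD(2,3)[OF hs] by auto
    then show "(\<lambda>i. hs (r i) x) \<longlonglongrightarrow> h x"
      using lim by (simp add: h_def)
  qed
  ultimately show ?thesis
    using r that by blast
qed

lemma L2_sqnorm_diff_le:
  assumes "h1 \<in> test_functions" "h2 \<in> test_functions" "\<nu> \<le> L2_sqnorm a b (\<lambda>x. (h1 x + h2 x) / 2)"
  shows "L2_sqnorm a b (\<lambda>x. h1 x - h2 x) \<le> 2 * (L2_sqnorm a b h1 - \<nu>) + 2 * (L2_sqnorm a b h2 - \<nu>)"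
  using L2_sqnorm_parallelogram[OF assms(1,2), of a b] assms(3) by argo

lemma Cauchy_if_bounded_by_null:
  fixes d :: "nat \<Rightarrow> nat \<Rightarrow> real"
  assumes sym: "\<And>j k. d j k = d k j" and bound: "\<And>j k. k \<le> j \<Longrightarrow> d j k \<le> B k"
    and B: "B \<longlonglongrightarrow> 0" and e: "e > 0"
  shows "\<exists>N. \<forall>j\<ge>N. \<forall>k\<ge>N. d j k < e"
proof -
  obtain N where N: "\<And>k. N \<le> k \<Longrightarrow> B k < e"
    using order_tendstoD(2)[OF B e] by (auto simp: eventually_sequentially)
  have "d j k < e" if "N \<le> j" "N \<le> k" for j k
  proof (cases "k \<le> j")
    case True
    then show ?thesis
      using bound[OF True] N[OF that(2)] by linarith
  next
    case False
    then have "j \<le> k"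
      by simp
    then show ?thesis
      using bound N[OF that(1)] sym[of j k] by fastforce
  qed
  then show ?thesis
    by blast
qed

text \<open>Pick in the \<open>k\<close>-th set a function whose \<open>L\<^sup>2\<close> norm is within \<open>1/(k+1)\<close> of the infimum
  \<open>\<nu> k\<close>. The infima increase to a limit, and by the parallelogram law two picks can only be far
  apart if their midpoint undercuts that infimum.\<close>
lemma nested_midpoint_convex_L2_Cauchy:
  fixes S :: "nat \<Rightarrow> (real \<Rightarrow> real) set"
  assumes sub: "\<And>k. S k \<subseteq> test_functions" and ne: "\<And>k. S k \<noteq> {}" and dec: "decseq S"
    and mid: "\<And>k h1 h2. h1 \<in> S k \<Longrightarrow> h2 \<in> S k \<Longrightarrow> (\<lambda>x. (h1 x + h2 x) / 2) \<in> S k"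
  obtains hs where "\<And>k. hs k \<in> S k"
    "\<And>e. e > 0 \<Longrightarrow> \<exists>N. \<forall>j\<ge>N. \<forall>k\<ge>N. L2_sqnorm a b (\<lambda>x. hs j x - hs k x) < e"
proof -
  let ?N = "L2_sqnorm a b"
  define \<nu> where "\<nu> k = Inf (?N ` S k)" for k
  have bdd: "bdd_below (?N ` S k)" for k
    using L2_sqnorm_bounds(1) sub by (intro bdd_belowI[where m=0]) blast
  have \<nu>_le: "\<nu> k \<le> ?N h" if "h \<in> S k" for k h
    unfolding \<nu>_def using bdd that by (auto intro: cInf_lower)
  have inc: "incseq \<nu>"
    unfolding \<nu>_def using ne bdd decseq_SucD[OF dec]
    by (intro incseq_SucI cInf_superset_mono image_mono) auto
  have "\<nu> k \<le> measure lborel {a..b}" for k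
    using ne[of k] sub \<nu>_le L2_sqnorm_bounds(2) by (meson ex_in_conv order_trans subsetD)
  then have conv: "\<nu> \<longlonglongrightarrow> (SUP k. \<nu> k)"
    by (intro LIMSEQ_incseq_SUP inc bdd_aboveI2)
  have "\<exists>h. h \<in> S k \<and> ?N h < \<nu> k + inverse (real (Suc k))" for k
    using cInf_lessD[of "?N ` S k" "\<nu> k + inverse (real (Suc k))"] ne[of k]
    unfolding \<nu>_def by auto
  then obtain hs where hs: "\<And>k. hs k \<in> S k" and hs_N: "\<And>k. ?N (hs k) < \<nu> k + inverse (real (Suc k))"
    by metis
  have bound: "?N (\<lambda>x. hs j x - hs k x) \<le> 2 * ((SUP k. \<nu> k) - \<nu> k) + 4 * inverse (real (Suc k))"
    if "k \<le> j" for j k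
  proof -
    have "hs j \<in> S k"
      using hs[of j] decseqD[OF dec that] by blast
    then have "?N (\<lambda>x. hs j x - hs k x) \<le> 2 * (?N (hs j) - \<nu> k) + 2 * (?N (hs k) - \<nu> k)"
      using sub hs by (intro L2_sqnorm_diff_le \<nu>_le mid) blast+
    moreover have "inverse (real (Suc j)) \<le> inverse (real (Suc k))"
      using that by (simp add: le_imp_inverse_le)
    ultimately show ?thesis
      using hs_N[of j] hs_N[of k] incseq_le[OF inc conv, of j] by argo
  qed
  have "(\<lambda>k. 2 * ((SUP k. \<nu> k) - \<nu> k) + 4 * inverse (real (Suc k)))
      \<longlonglongrightarrow> 2 * ((SUP k. \<nu> k) - (SUP k. \<nu> k)) + 4 * 0"
    by (intro tendsto_intros conv LIMSEQ_inverse_real_of_nat)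
  then have null: "(\<lambda>k. 2 * ((SUP k. \<nu> k) - \<nu> k) + 4 * inverse (real (Suc k))) \<longlonglongrightarrow> 0"
    by simp
  have sym: "?N (\<lambda>x. hs j x - hs k x) = ?N (\<lambda>x. hs k x - hs j x)" for j k
    unfolding L2_sqnorm_def by (simp add: power2_commute)
  have "\<exists>N. \<forall>j\<ge>N. \<forall>k\<ge>N. ?N (\<lambda>x. hs j x - hs k x) < e" if "e > 0" for e
    by (rule Cauchy_if_bounded_by_null[OF sym _ null that]) (rule bound)
  then show ?thesis
    using hs that by blast
qed

lemma test_functions_attains_min:
  fixes D :: "(real \<Rightarrow> real) \<Rightarrow> real"
  assumes bdd: "bdd_below (D ` test_functions)"
    and mid: "\<And>h1 h2. h1 \<in> test_functions \<Longrightarrow> h2 \<in> test_functions \<Longrightarrow>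
      D (\<lambda>x. (h1 x + h2 x) / 2) \<le> (D h1 + D h2) / 2"
    and cont: "\<And>hs h. (\<And>i. hs i \<in> test_functions) \<Longrightarrow> h \<in> test_functions \<Longrightarrow>
      AE x in lborel. x \<in> {a..b} \<longrightarrow> (\<lambda>i. hs i x) \<longlonglongrightarrow> h x \<Longrightarrow> (\<lambda>i. D (hs i)) \<longlonglongrightarrow> D h"
  shows "\<exists>h\<in>test_functions. \<forall>g\<in>test_functions. D h \<le> D g"
proof -
  define \<delta> where "\<delta> = Inf (D ` test_functions)"
  have ne: "test_functions \<noteq> {}"
    unfolding test_functions_def by (auto intro!: exI[of _ "\<lambda>_. 0"])
  have \<delta>_le: "\<delta> \<le> D g" if "g \<in> test_functions" for g
    unfolding \<delta>_def using bdd that by (auto intro: cInf_lower)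
  define S where "S k = {h \<in> test_functions. D h \<le> \<delta> + inverse (real (Suc k))}" for k
  have sub: "S k \<subseteq> test_functions" for k
    unfolding S_def by blast
  have S_ne: "S k \<noteq> {}" for k
    using cInf_lessD[of "D ` test_functions" "\<delta> + inverse (real (Suc k))"] ne
    unfolding S_def \<delta>_def by force
  have dec: "decseq S"
    unfolding S_def by (intro decseq_SucI) (auto intro: order_trans le_imp_inverse_le)
  have S_mid: "(\<lambda>x. (h1 x + h2 x) / 2) \<in> S k" if "h1 \<in> S k" "h2 \<in> S k" for k h1 h2
    using that mid[of h1 h2] test_functions_midpoint[of h1 h2] unfolding S_def by auto
  obtain hs where hs: "\<And>k. hs k \<in> S k"
    and L2_Cauchy: "\<And>e. e > 0 \<Longrightarrow> \<exists>N. \<forall>j\<ge>N. \<forall>k\<ge>N. L2_sqnorm a b (\<lambda>x. hs j x - hs k x) < e"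
    using nested_midpoint_convex_L2_Cauchy[where a=a and b=b, OF sub S_ne dec] S_mid by blast
  have hs_test: "\<And>k. hs k \<in> test_functions"
    using hs sub by blast
  have L1_Cauchy: "\<exists>N. \<forall>j\<ge>N. \<forall>k\<ge>N. (LINT x:{a..b}|lborel. \<bar>hs j x - hs k x\<bar>) < e"
    if "e > 0" for e
    using L2_Cauchy_imp_L1_Cauchy[of hs a b] hs_test L2_Cauchy that by blast
  obtain r h where r: "strict_mono r" and h: "h \<in> test_functions"
    and lim: "AE x in lborel. x \<in> {a..b} \<longrightarrow> (\<lambda>i. hs (r i) x) \<longlonglongrightarrow> h x"
    using test_functions_L1_Cauchy_AE_subseq[of hs a b] hs_test L1_Cauchy by blast
  have "D (hs (r i)) \<le> \<delta> + inverse (real (Suc i))" for i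
    using hs[of "r i"] seq_suble[OF r, of i] unfolding S_def
    by (auto intro: order_trans le_imp_inverse_le)
  moreover have "(\<lambda>i. \<delta> + inverse (real (Suc i))) \<longlonglongrightarrow> \<delta> + 0"
    by (intro tendsto_intros LIMSEQ_inverse_real_of_nat)
  ultimately have "D h \<le> \<delta>"
    using LIMSEQ_le[OF cont[OF hs_test h lim]] by auto
  then show ?thesis
    using h \<delta>_le by force
qed

lemma sum_power2_midpoint_le:
  fixes u v :: "'i \<Rightarrow> real"
  shows "(\<Sum>j\<in>J. ((u j + v j) / 2)\<^sup>2) \<le> ((\<Sum>j\<in>J. (u j)\<^sup>2) + (\<Sum>j\<in>J. (v j)\<^sup>2)) / 2"
proof -
  have "((u j + v j) / 2)\<^sup>2 \<le> ((u j)\<^sup>2 + (v j)\<^sup>2) / 2" for j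
    using sum_squares_bound[of "u j" "v j"] by (simp add: power2_eq_square field_simps)
  then have "(\<Sum>j\<in>J. ((u j + v j) / 2)\<^sup>2) \<le> (\<Sum>j\<in>J. ((u j)\<^sup>2 + (v j)\<^sup>2) / 2)"
    by (rule sum_mono)
  then show ?thesis
    by (simp add: sum.distrib flip: sum_divide_distrib)
qed

lemma nearest_point_first_order:
  fixes p q z :: "nat \<Rightarrow> real"
  assumes near: "\<And>t. 0 < t \<Longrightarrow> t \<le> 1 \<Longrightarrow>
    (\<Sum>j\<le>n. (p j - z j)\<^sup>2) \<le> (\<Sum>j\<le>n. ((1 - t) * p j + t * q j - z j)\<^sup>2)"
  shows "0 \<le> (\<Sum>j\<le>n. (p j - z j) * (q j - p j))"
proof -
  define S where "S = (\<Sum>j\<le>n. (p j - z j) * (q j - p j))"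
  define Q where "Q = (\<Sum>j\<le>n. (q j - p j)\<^sup>2)"
  have "0 \<le> 2 * S + t * Q" if "0 < t" "t \<le> 1" for t
  proof -
    have "(\<Sum>j\<le>n. ((1 - t) * p j + t * q j - z j)\<^sup>2)
        = (\<Sum>j\<le>n. (p j - z j)\<^sup>2 + t * (2 * ((p j - z j) * (q j - p j)) + t * (q j - p j)\<^sup>2))"
      by (intro sum.cong) (simp_all add: power2_eq_square algebra_simps)
    also have "\<dots> = (\<Sum>j\<le>n. (p j - z j)\<^sup>2) + t * (2 * S + t * Q)"
      unfolding S_def Q_def by (simp add: sum.distrib sum_distrib_left distrib_left)
    finally show ?thesis
      using near[OF that] \<open>0 < t\<close> by (simp add: zero_le_mult_iff)
  qed
  then have "\<forall>\<^sub>F t in at_right 0. 0 \<le> 2 * S + t * Q"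
    using eventually_at_right_real[of 0 1] by (auto elim: eventually_mono)
  moreover have "((\<lambda>t. 2 * S + t * Q) \<longlongrightarrow> 2 * S + 0 * Q) (at_right 0)"
    by (intro tendsto_intros)
  ultimately have "0 \<le> 2 * S + 0 * Q"
    by (intro tendsto_lowerbound) auto
  then show ?thesis
    unfolding S_def by simp
qed

definition lorenz_point :: "real \<Rightarrow> real \<Rightarrow> (nat \<Rightarrow> real \<Rightarrow> real) \<Rightarrow> (real \<Rightarrow> real) \<Rightarrow> nat \<Rightarrow> real" where
  "lorenz_point a b f h i = (LINT x:{a..b}|lborel. h x * f i x)"

definition zonoid_support :: "nat \<Rightarrow> real \<Rightarrow> real \<Rightarrow> (nat \<Rightarrow> real \<Rightarrow> real) \<Rightarrow> (nat \<Rightarrow> real) \<Rightarrow> real" where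
  "zonoid_support n a b f w = (LINT x:{a..b}|lborel. max 0 (\<Sum>j\<le>n. w j * f j x))"

lemma lorenz_zonoid_eq_image:
  "lorenz_zonoid n a b f = (\<lambda>h. map (lorenz_point a b f h) [0..<Suc n]) ` test_functions"
proof
  show "lorenz_zonoid n a b f \<subseteq> (\<lambda>h. map (lorenz_point a b f h) [0..<Suc n]) ` test_functions"
  proof
    fix z assume "z \<in> lorenz_zonoid n a b f"
    then obtain h where z: "z = map (\<lambda>i. LINT x:{a..b}|lborel. h x * f i x) [0..<Suc n]"
      and h: "h \<in> borel_measurable lborel" "\<forall>x\<in>{a..b}. 0 \<le> h x \<and> h x \<le> 1"
      unfolding lorenz_zonoid_def by blast
    define h' where "h' x = max 0 (min 1 (h x))" for x
    have "h' \<in> borel_measurable lborel"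
      unfolding h'_def using h(1) by measurable
    then have "h' \<in> test_functions"
      unfolding test_functions_def h'_def by auto
    moreover have "lorenz_point a b f h' = (\<lambda>i. LINT x:{a..b}|lborel. h x * f i x)"
      unfolding lorenz_point_def h'_def using h(2)
      by (intro ext set_lebesgue_integral_cong) auto
    ultimately show "z \<in> (\<lambda>h. map (lorenz_point a b f h) [0..<Suc n]) ` test_functions"
      unfolding z by (intro image_eqI[where x=h']) auto
  qed
  show "(\<lambda>h. map (lorenz_point a b f h) [0..<Suc n]) ` test_functions \<subseteq> lorenz_zonoid n a b f"
    unfolding lorenz_zonoid_def lorenz_point_def test_functions_def by blast
qed

locale density_experiment =
  fixes n :: nat and a b :: real and f :: "nat \<Rightarrow> real \<Rightarrow> real"
  assumes is_experiment: "is_experiment n a b f"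
begin

lemma
  assumes "i \<le> n"
  shows density_measurable: "f i \<in> borel_measurable lborel"
    and density_nonneg: "x \<in> {a..b} \<Longrightarrow> 0 \<le> f i x"
    and density_integrable: "set_integrable lborel {a..b} (f i)"
    and density_integral: "(LINT x:{a..b}|lborel. f i x) = 1"
  using is_experiment assms unfolding is_experiment_def by auto

lemma set_integrable_bounded_mult_density:
  assumes "h \<in> borel_measurable lborel" "\<And>x. x \<in> {a..b} \<Longrightarrow> \<bar>h x\<bar> \<le> K" "i \<le> n"
  shows "set_integrable lborel {a..b} (\<lambda>x. h x * f i x)"
proof (rule set_integrable_dominated[where g="f i" and K=K])
  show "(\<lambda>x. h x * f i x) \<in> borel_measurable lborel"
    using assms(1) density_measurable[OF assms(3)] by measurable
  show "\<bar>h x * f i x\<bar> \<le> K * f i x" if "x \<in> {a..b}" for x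
    using assms(2)[OF that] density_nonneg[OF assms(3) that]
    by (simp add: abs_mult mult_right_mono)
qed (use assms density_integrable in auto)

lemma lorenz_point_weighted_sum:
  assumes "h \<in> borel_measurable lborel" "\<And>x. x \<in> {a..b} \<Longrightarrow> \<bar>h x\<bar> \<le> K"
  shows "set_integrable lborel {a..b} (\<lambda>x. h x * (\<Sum>j\<le>n. w j * f j x))"
    and "(\<Sum>j\<le>n. w j * lorenz_point a b f h j) = (LINT x:{a..b}|lborel. h x * (\<Sum>j\<le>n. w j * f j x))"
proof -
  have int: "set_integrable lborel {a..b} (\<lambda>x. w j * (h x * f j x))" if "j \<in> {..n}" for j
    using set_integrable_bounded_mult_density[OF assms] that by simp
  have eq: "h x * (\<Sum>j\<le>n. w j * f j x) = (\<Sum>j\<le>n. w j * (h x * f j x))" for x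
    by (simp add: sum_distrib_left algebra_simps)
  show "set_integrable lborel {a..b} (\<lambda>x. h x * (\<Sum>j\<le>n. w j * f j x))"
    unfolding eq by (rule set_integrable_sum[OF int])
  have "(LINT x:{a..b}|lborel. (\<Sum>j\<le>n. w j * (h x * f j x)))
      = (\<Sum>j\<le>n. LINT x:{a..b}|lborel. w j * (h x * f j x))"
    by (rule set_integral_sum) (rule int)
  then show "(\<Sum>j\<le>n. w j * lorenz_point a b f h j) = (LINT x:{a..b}|lborel. h x * (\<Sum>j\<le>n. w j * f j x))"
    unfolding eq lorenz_point_def by simp
qed

lemma set_integrable_support_integrand:
  "set_integrable lborel {a..b} (\<lambda>x. max 0 (\<Sum>j\<le>n. w j * f j x))"
proof (rule set_integrable_dominated[where g="\<lambda>x. \<Sum>j\<le>n. \<bar>w j\<bar> * f j x" and K=1])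
  show "set_integrable lborel {a..b} (\<lambda>x. \<Sum>j\<le>n. \<bar>w j\<bar> * f j x)"
    using density_integrable by (intro set_integrable_sum) auto
  show "\<bar>max 0 (\<Sum>j\<le>n. w j * f j x)\<bar> \<le> 1 * (\<Sum>j\<le>n. \<bar>w j\<bar> * f j x)" if "x \<in> {a..b}" for x
    using order_trans[OF sum_abs sum_mono[of "{..n}" "\<lambda>j. \<bar>w j * f j x\<bar>" "\<lambda>j. \<bar>w j\<bar> * f j x"]]
      density_nonneg[OF _ that] by (force simp: abs_mult)
  show "(\<lambda>x. max 0 (\<Sum>j\<le>n. w j * f j x)) \<in> borel_measurable lborel"
    using density_measurable by measurable
qed auto

lemma lorenz_point_le_support:
  assumes h: "h \<in> test_functions"
  shows "(\<Sum>j\<le>n. w j * lorenz_point a b f h j) \<le> zonoid_support n a b f w"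
proof -
  note h_meas = test_functionsD(1)[OF h] and h_abs = test_functionsD(4)[OF h]
  have "(LINT x:{a..b}|lborel. h x * (\<Sum>j\<le>n. w j * f j x)) \<le> zonoid_support n a b f w"
    unfolding zonoid_support_def
  proof (rule set_integral_mono[OF lorenz_point_weighted_sum(1)[OF h_meas h_abs] set_integrable_support_integrand])
    show "h x * (\<Sum>j\<le>n. w j * f j x) \<le> max 0 (\<Sum>j\<le>n. w j * f j x)" for x
      using test_functionsD(2,3)[OF h, where x=x]
      by (cases "0 \<le> (\<Sum>j\<le>n. w j * f j x)")
        (auto simp: mult_left_le_one_le mult_nonneg_nonpos intro: order_trans[OF _ max.cobounded2])
  qed
  then show ?thesis
    using lorenz_point_weighted_sum(2)[OF h_meas h_abs] by simp
qed

lemma support_attained: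
  "\<exists>h\<in>test_functions. (\<Sum>j\<le>n. w j * lorenz_point a b f h j) = zonoid_support n a b f w"
proof
  define h where "h x = (if 0 < (\<Sum>j\<le>n. w j * f j x) then 1 else 0 :: real)" for x
  have h_meas: "h \<in> borel_measurable lborel"
    unfolding h_def using density_measurable by measurable
  then show "h \<in> test_functions"
    unfolding test_functions_def h_def by auto
  have "(\<Sum>j\<le>n. w j * lorenz_point a b f h j) = (LINT x:{a..b}|lborel. h x * (\<Sum>j\<le>n. w j * f j x))"
    by (rule lorenz_point_weighted_sum(2)[OF h_meas, where K=1]) (simp add: h_def)
  also have "\<dots> = zonoid_support n a b f w"
    unfolding zonoid_support_def h_def by (rule set_lebesgue_integral_cong) auto
  finally show "(\<Sum>j\<le>n. w j * lorenz_point a b f h j) = zonoid_support n a b f w" .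
qed

lemma zonoid_support_le_iff:
  "zonoid_support n a b f w \<le> t \<longleftrightarrow> (\<forall>h\<in>test_functions. (\<Sum>j\<le>n. w j * lorenz_point a b f h j) \<le> t)"
proof
  assume "zonoid_support n a b f w \<le> t"
  then show "\<forall>h\<in>test_functions. (\<Sum>j\<le>n. w j * lorenz_point a b f h j) \<le> t"
    using lorenz_point_le_support order_trans by blast
next
  assume all: "\<forall>h\<in>test_functions. (\<Sum>j\<le>n. w j * lorenz_point a b f h j) \<le> t"
  obtain h where h: "h \<in> test_functions"
    and attained: "(\<Sum>j\<le>n. w j * lorenz_point a b f h j) = zonoid_support n a b f w"
    using support_attained[of w] by blast
  show "zonoid_support n a b f w \<le> t"
    using all h unfolding attained[symmetric] by blast
qed

lemma lorenz_point_lincomb: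
  assumes "h1 \<in> test_functions" "h2 \<in> test_functions" "i \<le> n"
  shows "lorenz_point a b f (\<lambda>x. c1 * h1 x + c2 * h2 x) i
    = c1 * lorenz_point a b f h1 i + c2 * lorenz_point a b f h2 i"
proof -
  have int: "set_integrable lborel {a..b} (\<lambda>x. h1 x * f i x)"
    "set_integrable lborel {a..b} (\<lambda>x. h2 x * f i x)"
    using set_integrable_bounded_mult_density[OF test_functionsD(1,4)[OF assms(1)] assms(3)]
      set_integrable_bounded_mult_density[OF test_functionsD(1,4)[OF assms(2)] assms(3)] .
  have "lorenz_point a b f (\<lambda>x. c1 * h1 x + c2 * h2 x) i
      = (LINT x:{a..b}|lborel. c1 * (h1 x * f i x) + c2 * (h2 x * f i x))"
    unfolding lorenz_point_def by (simp add: algebra_simps)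
  also have "\<dots> = c1 * lorenz_point a b f h1 i + c2 * lorenz_point a b f h2 i"
    unfolding lorenz_point_def using int by (subst set_integral_add) auto
  finally show ?thesis .
qed

lemma lorenz_point_tendsto:
  assumes hs: "\<And>k. hs k \<in> test_functions" and h: "h \<in> test_functions" and "i \<le> n"
    and lim: "AE x in lborel. x \<in> {a..b} \<longrightarrow> (\<lambda>k. hs k x) \<longlonglongrightarrow> h x"
  shows "(\<lambda>k. lorenz_point a b f (hs k) i) \<longlonglongrightarrow> lorenz_point a b f h i"
  unfolding lorenz_point_def set_lebesgue_integral_def
proof (rule integral_dominated_convergence[where w="\<lambda>x. indicator {a..b} x *\<^sub>R f i x"])
  note meas = test_functionsD(1)[OF hs] test_functionsD(1)[OF h] density_measurable[OF \<open>i \<le> n\<close>]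
  show "(\<lambda>x. indicat_real {a..b} x *\<^sub>R (h x * f i x)) \<in> borel_measurable lborel"
    using meas by measurable
  show "(\<lambda>x. indicat_real {a..b} x *\<^sub>R (hs k x * f i x)) \<in> borel_measurable lborel" for k
    using meas by measurable
  show "integrable lborel (\<lambda>x. indicat_real {a..b} x *\<^sub>R f i x)"
    using density_integrable[OF \<open>i \<le> n\<close>] unfolding set_integrable_def .
  show "AE x in lborel. (\<lambda>k. indicat_real {a..b} x *\<^sub>R (hs k x * f i x))
      \<longlonglongrightarrow> indicat_real {a..b} x *\<^sub>R (h x * f i x)"
    using lim
  proof eventually_elim
    case (elim x)
    then show ?case
      by (cases "x \<in> {a..b}") (simp_all add: tendsto_mult_right)
  qed
  show "AE x in lborel. norm (indicat_real {a..b} x *\<^sub>R (hs k x * f i x)) \<le> indicat_real {a..b} x *\<^sub>R f i x" for k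
    using test_functionsD(2,3)[OF hs[of k]] density_nonneg[OF \<open>i \<le> n\<close>]
    by (intro AE_I2) (auto simp: indicator_def abs_mult mult_left_le_one_le)
qed

lemma exists_nearest_lorenz_point:
  "\<exists>h\<in>test_functions. \<forall>g\<in>test_functions.
    (\<Sum>j\<le>n. (lorenz_point a b f h j - z j)\<^sup>2) \<le> (\<Sum>j\<le>n. (lorenz_point a b f g j - z j)\<^sup>2)"
proof -
  let ?D = "\<lambda>h. \<Sum>j\<le>n. (lorenz_point a b f h j - z j)\<^sup>2"
  have bdd: "bdd_below (?D ` test_functions)"
    by (intro bdd_belowI[where m=0]) (auto intro: sum_nonneg)
  have mid: "?D (\<lambda>x. (h1 x + h2 x) / 2) \<le> (?D h1 + ?D h2) / 2"
    if "h1 \<in> test_functions" "h2 \<in> test_functions" for h1 h2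
  proof -
    have mid_eq: "(\<lambda>x. (h1 x + h2 x) / 2) = (\<lambda>x. 1/2 * h1 x + 1/2 * h2 x)"
      by (simp add: field_simps)
    have sq: "(lorenz_point a b f (\<lambda>x. (h1 x + h2 x) / 2) j - z j)\<^sup>2
        = (((lorenz_point a b f h1 j - z j) + (lorenz_point a b f h2 j - z j)) / 2)\<^sup>2" if "j \<le> n" for j
      unfolding mid_eq lorenz_point_lincomb[OF \<open>h1 \<in> _\<close> \<open>h2 \<in> _\<close> that]
      by (rule arg_cong[where f=power2]) (simp add: field_simps)
    have "?D (\<lambda>x. (h1 x + h2 x) / 2)
        = (\<Sum>j\<le>n. (((lorenz_point a b f h1 j - z j) + (lorenz_point a b f h2 j - z j)) / 2)\<^sup>2)"
      by (intro sum.cong refl) (simp only: atMost_iff sq)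
    then show ?thesis
      using sum_power2_midpoint_le[of "\<lambda>j. lorenz_point a b f h1 j - z j" "\<lambda>j. lorenz_point a b f h2 j - z j" "{..n}"]
      by simp
  qed
  have cont: "(\<lambda>k. ?D (hs k)) \<longlonglongrightarrow> ?D h"
    if "\<And>k. hs k \<in> test_functions" "h \<in> test_functions"
      "AE x in lborel. x \<in> {a..b} \<longrightarrow> (\<lambda>k. hs k x) \<longlonglongrightarrow> h x" for hs h
    using lorenz_point_tendsto[OF that(1,2) _ that(3)] by (intro tendsto_intros) auto
  show ?thesis
    by (rule test_functions_attains_min[where a=a and b=b and D="?D", OF bdd mid cont])
qed

lemma nearest_lorenz_point_first_order:
  assumes h: "h \<in> test_functions" and g: "g \<in> test_functions"
    and nearest: "\<And>g. g \<in> test_functions \<Longrightarrow>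
      (\<Sum>j\<le>n. (lorenz_point a b f h j - z j)\<^sup>2) \<le> (\<Sum>j\<le>n. (lorenz_point a b f g j - z j)\<^sup>2)"
  shows "0 \<le> (\<Sum>j\<le>n. (lorenz_point a b f h j - z j) * (lorenz_point a b f g j - lorenz_point a b f h j))"
proof (rule nearest_point_first_order)
  fix t :: real assume "0 < t" "t \<le> 1"
  then have "(\<lambda>x. (1 - t) * h x + t * g x) \<in> test_functions"
    by (intro test_functions_convex_comb[OF h g]) auto
  from nearest[OF this]
  show "(\<Sum>j\<le>n. (lorenz_point a b f h j - z j)\<^sup>2)
      \<le> (\<Sum>j\<le>n. ((1 - t) * lorenz_point a b f h j + t * lorenz_point a b f g j - z j)\<^sup>2)"
    using lorenz_point_lincomb[OF h g] by simp
qed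

text \<open>The nearest Lorenz point \<open>p\<close> to \<open>z\<close> satisfies \<open>(p - z) \<cdot> (p' - p) \<ge> 0\<close> for every Lorenz
  point \<open>p'\<close>; taking \<open>p'\<close> extremal in direction \<open>z - p\<close> and using that \<open>z\<close> is below the support
  function in that direction gives \<open>|p - z|\<^sup>2 \<le> 0\<close>.\<close>
lemma lorenz_point_exists_if_below_support:
  assumes below: "\<And>w. (\<Sum>j\<le>n. w j * z j) \<le> zonoid_support n a b f w"
  shows "\<exists>h\<in>test_functions. \<forall>j\<le>n. lorenz_point a b f h j = z j"
proof -
  obtain h where h: "h \<in> test_functions" and nearest: "\<And>g. g \<in> test_functions \<Longrightarrow>
      (\<Sum>j\<le>n. (lorenz_point a b f h j - z j)\<^sup>2) \<le> (\<Sum>j\<le>n. (lorenz_point a b f g j - z j)\<^sup>2)"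
    using exists_nearest_lorenz_point[of z] by blast
  define e where "e j = lorenz_point a b f h j - z j" for j
  obtain g where g: "g \<in> test_functions"
    and g_support: "(\<Sum>j\<le>n. - e j * lorenz_point a b f g j) = zonoid_support n a b f (\<lambda>j. - e j)"
    using support_attained[of "\<lambda>j. - e j"] by blast
  have "(\<Sum>j\<le>n. e j * lorenz_point a b f g j) \<le> (\<Sum>j\<le>n. e j * z j)"
    using below[of "\<lambda>j. - e j"] g_support by (simp add: sum_negf)
  then have "(\<Sum>j\<le>n. (e j)\<^sup>2) \<le> - (\<Sum>j\<le>n. e j * (lorenz_point a b f g j - lorenz_point a b f h j))"
    by (simp add: e_def power2_eq_square right_diff_distrib sum_subtractf)
  also have "\<dots> \<le> 0"
    using nearest_lorenz_point_first_order[OF h g nearest] unfolding e_def by simp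
  finally have "(\<Sum>j\<le>n. (e j)\<^sup>2) = 0"
    by (intro antisym sum_nonneg) auto
  then have "\<forall>j\<le>n. lorenz_point a b f h j = z j"
    by (simp add: e_def sum_nonneg_eq_0_iff)
  then show ?thesis
    using h by blast
qed

lemma lorenz_point_exists_iff_below_support:
  "(\<exists>h\<in>test_functions. \<forall>j\<le>n. lorenz_point a b f h j = z j)
    \<longleftrightarrow> (\<forall>w. (\<Sum>j\<le>n. w j * z j) \<le> zonoid_support n a b f w)"
proof
  assume "\<exists>h\<in>test_functions. \<forall>j\<le>n. lorenz_point a b f h j = z j"
  then obtain h where h: "h \<in> test_functions" and z: "\<And>j. j \<le> n \<Longrightarrow> lorenz_point a b f h j = z j"
    by blast
  have "(\<Sum>j\<le>n. w j * z j) = (\<Sum>j\<le>n. w j * lorenz_point a b f h j)" for w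
    using z by simp
  then show "\<forall>w. (\<Sum>j\<le>n. w j * z j) \<le> zonoid_support n a b f w"
    using lorenz_point_le_support[OF h] by simp
qed (use lorenz_point_exists_if_below_support in blast)

end

lemma lorenz_zonoid_subset_iff_support_le:
  assumes "is_experiment n a b f" and "is_experiment n c d g"
  shows "lorenz_zonoid n c d g \<subseteq> lorenz_zonoid n a b f
    \<longleftrightarrow> (\<forall>w. zonoid_support n c d g w \<le> zonoid_support n a b f w)"
proof -
  interpret F: density_experiment n a b f by (rule density_experiment.intro) (rule assms(1))
  interpret G: density_experiment n c d g by (rule density_experiment.intro) (rule assms(2))
  have map_eq: "map (lorenz_point c d g h) [0..<Suc n] = map (lorenz_point a b f h') [0..<Suc n]
    \<longleftrightarrow> (\<forall>j\<le>n. lorenz_point a b f h' j = lorenz_point c d g h j)" for h h'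
    by (auto simp: atLeast0LessThan lessThan_Suc_atMost simp del: upt_Suc)
  have "lorenz_zonoid n c d g \<subseteq> lorenz_zonoid n a b f
    \<longleftrightarrow> (\<forall>h\<in>test_functions. \<exists>h'\<in>test_functions. \<forall>j\<le>n. lorenz_point a b f h' j = lorenz_point c d g h j)"
    unfolding lorenz_zonoid_eq_image image_subset_iff image_iff map_eq ..
  also have "\<dots> \<longleftrightarrow> (\<forall>h\<in>test_functions. \<forall>w.
      (\<Sum>j\<le>n. w j * lorenz_point c d g h j) \<le> zonoid_support n a b f w)"
    unfolding F.lorenz_point_exists_iff_below_support ..
  also have "\<dots> \<longleftrightarrow> (\<forall>w. zonoid_support n c d g w \<le> zonoid_support n a b f w)"
    unfolding G.zonoid_support_le_iff by blast
  finally show ?thesis .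
qed

lemma convex_on_max:
  fixes f g :: "'a::real_vector \<Rightarrow> real"
  assumes f: "convex_on S f" and g: "convex_on S g"
  shows "convex_on S (\<lambda>x. max (f x) (g x))"
proof (rule convex_onI)
  fix t :: real and x y assume t: "0 < t" "t < 1" and xy: "x \<in> S" "y \<in> S"
  have "(1 - t) * f x + t * f y \<le> (1 - t) * max (f x) (g x) + t * max (f y) (g y)"
    "(1 - t) * g x + t * g y \<le> (1 - t) * max (f x) (g x) + t * max (f y) (g y)"
    using t by (intro add_mono mult_left_mono; simp)+
  then show "max (f ((1 - t) *\<^sub>R x + t *\<^sub>R y)) (g ((1 - t) *\<^sub>R x + t *\<^sub>R y))
      \<le> (1 - t) * max (f x) (g x) + t * max (f y) (g y)"
    using convex_onD[OF f, of t x y] convex_onD[OF g, of t x y] t xy by simp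
qed (rule convex_on_imp_convex[OF f])

lemma convex_on_hinge: "convex_on UNIV (\<lambda>t::real. max 0 (t - s))"
proof (rule convex_on_max)
  show "convex_on UNIV (\<lambda>t::real. t - s)"
    by (rule convex_onI) (simp_all add: algebra_simps)
qed (simp add: convex_on_const)

lemma hinge_expansion:
  fixes x s v :: "nat \<Rightarrow> real"
  assumes x: "mono x" and v: "\<And>k. v (Suc k) = v k + s k * (x (Suc k) - x k)"
  shows "x m \<le> t \<Longrightarrow>
    v 0 + s 0 * (t - x 0) + (\<Sum>k<m. (s (Suc k) - s k) * max 0 (t - x (Suc k))) = v m + s m * (t - x m)"
proof (induction m)
  case (Suc m)
  have "x m \<le> t"
    using Suc.prems monoD[OF x, of m "Suc m"] by simp
  moreover have "max 0 (t - x (Suc m)) = t - x (Suc m)"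
    using Suc.prems by simp
  ultimately show ?case
    using Suc.IH v[of m] by (simp add: algebra_simps)
qed simp

lemma hinge_sum_truncate:
  fixes x c :: "nat \<Rightarrow> real"
  assumes x: "mono x" and "m \<le> N" "t \<le> x (Suc m)"
  shows "(\<Sum>k<N. c k * max 0 (t - x (Suc k))) = (\<Sum>k<m. c k * max 0 (t - x (Suc k)))"
proof (rule sum.mono_neutral_right)
  show "\<forall>k\<in>{..<N} - {..<m}. c k * max 0 (t - x (Suc k)) = 0"
  proof
    fix k assume "k \<in> {..<N} - {..<m}"
    then have "x (Suc m) \<le> x (Suc k)"
      using monoD[OF x, of "Suc m" "Suc k"] by simp
    then show "c k * max 0 (t - x (Suc k)) = 0"
      using assms(3) by simp
  qed
qed (use assms(2) in auto)

lemma exists_grid_cell: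
  fixes L h t :: real
  assumes h: "0 < h" and N: "0 < N" and t: "L \<le> t" "t \<le> L + real N * h"
  shows "\<exists>m<N. L + real m * h \<le> t \<and> t \<le> L + real (Suc m) * h"
proof -
  define y where "y = (t - L) / h"
  have y: "0 \<le> y" "t = L + y * h"
    using h t by (simp_all add: y_def field_simps)
  define k where "k = nat \<lfloor>y\<rfloor>"
  have k: "real k \<le> y" "y < real k + 1"
    using floor_correct[of y] y(1) unfolding k_def by auto
  show ?thesis
  proof (cases "k < N")
    case True
    have "real k * h \<le> y * h" "y * h \<le> (real k + 1) * h"
      using k h by (simp_all add: mult_right_mono)
    then show ?thesis
      using True y(2) by (intro exI[of _ k]) (simp add: algebra_simps)
  next
    case False
    then have "real (N - 1) \<le> y"
      using k N by simp
    then show ?thesis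
      using N h y(2) t(2) by (intro exI[of _ "N - 1"]) (simp add: mult_right_mono)
  qed
qed

lemma abs_diff_convex_comb_le:
  fixes c u v l \<epsilon> :: real
  assumes "\<bar>c - u\<bar> \<le> \<epsilon>" "\<bar>c - v\<bar> \<le> \<epsilon>" "0 \<le> l" "l \<le> 1"
  shows "\<bar>c - ((1 - l) * u + l * v)\<bar> \<le> \<epsilon>"
proof -
  have "\<bar>c - ((1 - l) * u + l * v)\<bar> = \<bar>(1 - l) * (c - u) + l * (c - v)\<bar>"
    by (simp add: algebra_simps)
  also have "\<dots> \<le> (1 - l) * \<bar>c - u\<bar> + l * \<bar>c - v\<bar>"
    using assms(3,4) abs_triangle_ineq[of "(1 - l) * (c - u)" "l * (c - v)"] by (simp add: abs_mult)
  also have "\<dots> \<le> \<epsilon>"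
    using assms by (intro convex_bound_le) auto
  finally show ?thesis .
qed

text \<open>The sum of hinges through the grid \<open>x k = L + k h\<close>, with slopes \<open>sl k\<close> of the chords of \<open>C\<close>,
  is the piecewise linear interpolant of \<open>C\<close>.\<close>
lemma hinge_interpolant_eq_chord:
  fixes C :: "real \<Rightarrow> real" and x :: "nat \<Rightarrow> real"
  assumes h: "0 < h" and x: "\<And>k. x k = L + real k * h"
    and m: "m < N" "x m \<le> t" "t \<le> x (Suc m)"
  defines "sl k \<equiv> (C (x (Suc k)) - C (x k)) / h"
  shows "C L + sl 0 * (t - L) + (\<Sum>k<N - 1. (sl (Suc k) - sl k) * max 0 (t - x (Suc k)))
    = (1 - (t - x m) / h) * C (x m) + (t - x m) / h * C (x (Suc m))"
proof -
  have mono: "mono x"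
    unfolding x using h by (intro monoI) (simp add: mult_right_mono)
  have width: "x (Suc k) - x k = h" for k
    unfolding x by (simp add: algebra_simps)
  have step: "C (x (Suc k)) = C (x k) + sl k * (x (Suc k) - x k)" for k
    unfolding sl_def width using h by simp
  have "(\<Sum>k<N - 1. (sl (Suc k) - sl k) * max 0 (t - x (Suc k)))
      = (\<Sum>k<m. (sl (Suc k) - sl k) * max 0 (t - x (Suc k)))"
    using m by (intro hinge_sum_truncate[OF mono]) auto
  moreover have "C (x 0) + sl 0 * (t - x 0) + (\<Sum>k<m. (sl (Suc k) - sl k) * max 0 (t - x (Suc k)))
      = C (x m) + sl m * (t - x m)"
    by (rule hinge_expansion[OF mono step m(2)])
  ultimately have "C L + sl 0 * (t - L) + (\<Sum>k<N - 1. (sl (Suc k) - sl k) * max 0 (t - x (Suc k)))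
      = C (x m) + sl m * (t - x m)"
    by (simp add: x)
  also have "\<dots> = (1 - (t - x m) / h) * C (x m) + (t - x m) / h * C (x (Suc m))"
    using h unfolding sl_def width[symmetric] by (simp add: field_simps)
  finally show ?thesis .
qed

lemma convex_hinge_approx:
  fixes C :: "real \<Rightarrow> real"
  assumes conv: "convex_on UNIV C" and LU: "L < U" and e: "\<epsilon> > 0"
  shows "\<exists>\<alpha> \<gamma> (N::nat) c s. (\<forall>k<N. 0 \<le> c k) \<and>
    (\<forall>t\<in>{L..U}. \<bar>C t - (\<alpha> + \<gamma> * t + (\<Sum>k<N. c k * max 0 (t - s k)))\<bar> \<le> \<epsilon>)"
proof -
  have "uniformly_continuous_on {L..U} C"
    using convex_on_continuous[OF open_UNIV conv]
    by (intro compact_uniformly_continuous) (auto intro: continuous_on_subset)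
  then obtain d where d: "d > 0"
    and close: "\<And>y t. y \<in> {L..U} \<Longrightarrow> t \<in> {L..U} \<Longrightarrow> \<bar>y - t\<bar> < d \<Longrightarrow> \<bar>C y - C t\<bar> < \<epsilon>"
    unfolding uniformly_continuous_on_def dist_real_def using e by metis
  obtain N :: nat where N: "(U - L) / d < real N"
    using reals_Archimedean2 by blast
  then have N0: "0 < N"
    using LU d by (cases N) (auto simp: field_simps)
  define h where "h = (U - L) / real N"
  have h: "0 < h" "h < d" "L + real N * h = U"
    unfolding h_def using LU N N0 d by (simp_all add: field_simps)
  define x where "x k = L + real k * h" for k
  define sl where "sl k = (C (x (Suc k)) - C (x k)) / h" for k
  have sl_mono: "sl k \<le> sl (Suc k)" for k
    using convex_on_slope_le[OF conv, of "x k" "x (Suc (Suc k))" "x (Suc k)"] h(1)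
    unfolding sl_def x_def by (simp add: field_simps)
  have "\<bar>C t - (C L + sl 0 * (t - L) + (\<Sum>k<N - 1. (sl (Suc k) - sl k) * max 0 (t - x (Suc k))))\<bar> \<le> \<epsilon>"
    if t: "t \<in> {L..U}" for t
  proof -
    obtain m where m: "m < N" "x m \<le> t" "t \<le> x (Suc m)"
      using exists_grid_cell[OF h(1) N0, of L t] t h(3) unfolding x_def by auto
    have "real (Suc m) * h \<le> real N * h"
      using m(1) h(1) by (intro mult_right_mono) auto
    then have grid: "x m \<in> {L..U}" "x (Suc m) \<in> {L..U}" "x (Suc m) - x m = h"
      using m h unfolding x_def by (auto simp: algebra_simps)
    have near: "\<bar>C t - C (x m)\<bar> \<le> \<epsilon>" "\<bar>C t - C (x (Suc m))\<bar> \<le> \<epsilon>"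
      using close[OF grid(1) t] close[OF grid(2) t] m grid(3) h(2) by (auto simp: abs_minus_commute)
    have "0 \<le> (t - x m) / h" "(t - x m) / h \<le> 1"
      using m grid(3) h(1) by (simp_all add: field_simps)
    then show ?thesis
      unfolding sl_def hinge_interpolant_eq_chord[OF h(1) x_def m]
      by (rule abs_diff_convex_comb_le[OF near])
  qed
  then show ?thesis
    using sl_mono
    by (intro exI[of _ "C L - sl 0 * L"] exI[of _ "sl 0"] exI[of _ "N - 1"]
        exI[of _ "\<lambda>k. sl (Suc k) - sl k"] exI[of _ "\<lambda>k. x (Suc k)"]) (auto simp: algebra_simps)
qed

lemma zonoid_support_scale:
  assumes "0 \<le> c"
  shows "zonoid_support n a b f (\<lambda>j. c * w j) = c * zonoid_support n a b f w"
proof -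
  have "max 0 (\<Sum>j\<le>n. c * w j * f j x) = c * max 0 (\<Sum>j\<le>n. w j * f j x)" for x
    using assms by (simp add: max_mult_distrib_left sum_distrib_left mult.assoc)
  then show ?thesis
    unfolding zonoid_support_def by simp
qed

context density_experiment
begin

context
  fixes q :: "nat \<Rightarrow> real"
  assumes q: "q \<in> prior_set n"
begin

lemma prior_nonneg: "j \<le> n \<Longrightarrow> 0 \<le> prior n q j"
  using q unfolding prior_set_def prior_def by auto

lemma sum_prior: "(\<Sum>j\<le>n. prior n q j) = 1"
proof -
  have "(\<Sum>j=1..n. prior n q j) = (\<Sum>j=1..n. q j)"
    unfolding prior_def by (intro sum.cong) auto
  then show ?thesis
    by (simp add: atMost_atLeast0 sum.atLeast_Suc_atMost prior_def)
qed

lemma mix_eq: "mix n f q x = (\<Sum>j\<le>n. prior n q j * f j x)"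
  unfolding mix_def atLeast0AtMost ..

lemma prior_density_le_mix:
  assumes "x \<in> {a..b}" "i \<le> n"
  shows "0 \<le> prior n q i * f i x" "prior n q i * f i x \<le> mix n f q x"
proof -
  have nonneg: "0 \<le> prior n q j * f j x" if "j \<le> n" for j
    using prior_nonneg[OF that] density_nonneg[OF that assms(1)] by simp
  show "0 \<le> prior n q i * f i x"
    by (rule nonneg[OF assms(2)])
  show "prior n q i * f i x \<le> mix n f q x"
    unfolding mix_eq using assms(2) nonneg by (intro member_le_sum) auto
qed

lemma mix_nonneg: "x \<in> {a..b} \<Longrightarrow> 0 \<le> mix n f q x"
  using prior_density_le_mix[of x 0] by simp

lemma mix_measurable: "mix n f q \<in> borel_measurable lborel"
  unfolding mix_eq[abs_def] using density_measurable by measurable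

lemma mix_integrable: "set_integrable lborel {a..b} (mix n f q)"
  and mix_integral: "(LINT x:{a..b}|lborel. mix n f q x) = 1"
proof -
  have int: "set_integrable lborel {a..b} (\<lambda>x. prior n q j * f j x)" if "j \<in> {..n}" for j
    using density_integrable that by simp
  show "set_integrable lborel {a..b} (mix n f q)"
    unfolding mix_eq[abs_def] by (rule set_integrable_sum) (rule int)
  have "(LINT x:{a..b}|lborel. mix n f q x) = (\<Sum>j\<le>n. LINT x:{a..b}|lborel. prior n q j * f j x)"
    unfolding mix_eq by (rule set_integral_sum) (rule int)
  then show "(LINT x:{a..b}|lborel. mix n f q x) = 1"
    using density_integral sum_prior by simp
qed

lemma abs_posterior_comb_le:
  assumes "x \<in> {a..b}"
  shows "\<bar>\<Sum>i=1..n. \<beta> i * posterior n f q i x\<bar> \<le> (\<Sum>i=1..n. \<bar>\<beta> i\<bar>)"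
proof -
  have "\<bar>\<beta> i * posterior n f q i x\<bar> \<le> \<bar>\<beta> i\<bar>" if "i \<in> {1..n}" for i
  proof -
    have "0 \<le> posterior n f q i x" "posterior n f q i x \<le> 1"
      using prior_density_le_mix[OF assms, of i] that
      unfolding posterior_def by (auto simp: divide_le_eq_1)
    then show ?thesis
      by (simp add: abs_mult mult_left_le)
  qed
  then show ?thesis
    by (rule order_trans[OF sum_abs sum_mono])
qed

text \<open>Where the mixture density vanishes, the posterior is the junk value \<open>0\<close>, but so is every
  summand on the right.\<close>
lemma posterior_comb_mult_mix:
  assumes "x \<in> {a..b}"
  shows "(\<Sum>i=1..n. \<beta> i * posterior n f q i x) * mix n f q x = (\<Sum>i=1..n. \<beta> i * (prior n q i * f i x))"
proof (cases "mix n f q x = 0")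
  case True
  then have "prior n q i * f i x = 0" if "i \<le> n" for i
    using prior_density_le_mix[OF assms that] by simp
  then have "(\<Sum>i=1..n. \<beta> i * (prior n q i * f i x)) = 0"
    by (intro sum.neutral) simp
  then show ?thesis
    using True by simp
next
  case False
  then show ?thesis
    unfolding posterior_def by (simp add: sum_distrib_right)
qed

lemma lcx_expect_integrable:
  assumes C: "continuous_on UNIV C"
  shows "set_integrable lborel {a..b} (\<lambda>x. C (\<Sum>i=1..n. \<beta> i * posterior n f q i x) * mix n f q x)"
proof -
  let ?B = "\<Sum>i=1..n. \<bar>\<beta> i\<bar>"
  have "compact (C ` {-?B..?B})"
    using C by (intro compact_continuous_image continuous_on_subset[OF C]) auto
  then obtain K where K: "\<And>t. t \<in> {-?B..?B} \<Longrightarrow> \<bar>C t\<bar> \<le> K"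
    using compact_imp_bounded bounded_iff by (metis image_eqI real_norm_def)
  have post_meas: "(\<lambda>x. posterior n f q i x) \<in> borel_measurable lborel" if "i \<le> n" for i
    unfolding posterior_def using density_measurable[OF that] mix_measurable by measurable
  show ?thesis
  proof (rule set_integrable_dominated[OF mix_integrable, where K=K])
    show "(\<lambda>x. C (\<Sum>i=1..n. \<beta> i * posterior n f q i x) * mix n f q x) \<in> borel_measurable lborel"
      using post_meas mix_measurable borel_measurable_continuous_onI[OF C] by measurable
    show "\<bar>C (\<Sum>i=1..n. \<beta> i * posterior n f q i x) * mix n f q x\<bar> \<le> K * mix n f q x"
      if "x \<in> {a..b}" for x
    proof -
      have "\<bar>C (\<Sum>i=1..n. \<beta> i * posterior n f q i x)\<bar> \<le> K"
        using abs_posterior_comb_le[OF that, of \<beta>] by (intro K) (simp add: abs_le_iff)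
      then show ?thesis
        using mix_nonneg[OF that] by (simp add: abs_mult mult_right_mono)
    qed
  qed auto
qed

lemma lcx_expect_add:
  assumes "continuous_on UNIV C1" "continuous_on UNIV C2"
  shows "lcx_expect n a b f q \<beta> (\<lambda>t. C1 t + C2 t) = lcx_expect n a b f q \<beta> C1 + lcx_expect n a b f q \<beta> C2"
  unfolding lcx_expect_def distrib_right
  using lcx_expect_integrable[OF assms(1)] lcx_expect_integrable[OF assms(2)] by simp

lemma lcx_expect_sum:
  assumes "\<And>k. k \<in> K \<Longrightarrow> continuous_on UNIV (C k)"
  shows "lcx_expect n a b f q \<beta> (\<lambda>t. \<Sum>k\<in>K. C k t) = (\<Sum>k\<in>K. lcx_expect n a b f q \<beta> (C k))"
  unfolding lcx_expect_def sum_distrib_right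
  by (rule set_integral_sum) (rule lcx_expect_integrable[OF assms])

lemma lcx_expect_cmult: "lcx_expect n a b f q \<beta> (\<lambda>t. c * C t) = c * lcx_expect n a b f q \<beta> C"
  unfolding lcx_expect_def by (simp add: mult.assoc)

lemma lcx_expect_affine: "lcx_expect n a b f q \<beta> (\<lambda>t. \<alpha> + \<gamma> * t) = \<alpha> + \<gamma> * (\<Sum>i=1..n. \<beta> i * q i)"
proof -
  have int: "set_integrable lborel {a..b} (\<lambda>x. \<beta> i * (prior n q i * f i x))" if "i \<in> {1..n}" for i
    using density_integrable that by simp
  have pointwise: "(\<alpha> + \<gamma> * (\<Sum>i=1..n. \<beta> i * posterior n f q i x)) * mix n f q x
      = \<alpha> * mix n f q x + \<gamma> * (\<Sum>i=1..n. \<beta> i * (prior n q i * f i x))" if "x \<in> {a..b}" for x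
    unfolding distrib_right mult.assoc posterior_comb_mult_mix[OF that] ..
  have "lcx_expect n a b f q \<beta> (\<lambda>t. \<alpha> + \<gamma> * t)
      = (LINT x:{a..b}|lborel. \<alpha> * mix n f q x + \<gamma> * (\<Sum>i=1..n. \<beta> i * (prior n q i * f i x)))"
    unfolding lcx_expect_def by (rule set_lebesgue_integral_cong) (simp, blast intro: pointwise)
  also have "\<dots> = \<alpha> + \<gamma> * (LINT x:{a..b}|lborel. (\<Sum>i=1..n. \<beta> i * (prior n q i * f i x)))"
  proof -
    have "set_integrable lborel {a..b} (\<lambda>x. \<Sum>i=1..n. \<beta> i * (prior n q i * f i x))"
      by (rule set_integrable_sum) (rule int)
    then show ?thesis
      using mix_integrable mix_integral by simp
  qed
  also have "(LINT x:{a..b}|lborel. (\<Sum>i=1..n. \<beta> i * (prior n q i * f i x)))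
      = (\<Sum>i=1..n. LINT x:{a..b}|lborel. \<beta> i * (prior n q i * f i x))"
    by (rule set_integral_sum) (rule int)
  also have "\<dots> = (\<Sum>i=1..n. \<beta> i * q i)"
    using density_integral by (intro sum.cong) (auto simp: prior_def)
  finally show ?thesis .
qed

lemma lcx_expect_hinge:
  "lcx_expect n a b f q \<beta> (\<lambda>t. max 0 (t - s))
    = zonoid_support n a b f (\<lambda>j. prior n q j * ((if j = 0 then 0 else \<beta> j) - s))"
proof -
  have pointwise: "max 0 ((\<Sum>i=1..n. \<beta> i * posterior n f q i x) - s) * mix n f q x
      = max 0 (\<Sum>j\<le>n. prior n q j * ((if j = 0 then 0 else \<beta> j) - s) * f j x)"
    if x: "x \<in> {a..b}" for x
  proof -
    have "prior n q j * ((if j = 0 then 0 else \<beta> j) - s) * f j x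
        = (if j = 0 then 0 else \<beta> j * (prior n q j * f j x)) - s * (prior n q j * f j x)" for j
      by (simp add: algebra_simps)
    then have "(\<Sum>j\<le>n. prior n q j * ((if j = 0 then 0 else \<beta> j) - s) * f j x)
        = (\<Sum>j\<le>n. (if j = 0 then 0 else \<beta> j * (prior n q j * f j x))) - s * mix n f q x"
      unfolding mix_eq by (simp add: sum_subtractf sum_distrib_left)
    also have "(\<Sum>j\<le>n. (if j = 0 then 0 else \<beta> j * (prior n q j * f j x)))
        = (\<Sum>i=1..n. \<beta> i * posterior n f q i x) * mix n f q x"
      unfolding posterior_comb_mult_mix[OF x] by (simp add: atMost_atLeast0 sum.atLeast_Suc_atMost)
    finally show ?thesis
      using mix_nonneg[OF x] by (simp add: max_mult_distrib_right left_diff_distrib)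
  qed
  show ?thesis
    unfolding lcx_expect_def zonoid_support_def
    by (rule set_lebesgue_integral_cong) (simp, blast intro: pointwise)
qed

lemma lcx_expect_hinge_comb:
  "lcx_expect n a b f q \<beta> (\<lambda>t. \<alpha> + \<gamma> * t + (\<Sum>k<N. \<kappa> k * max 0 (t - s k)))
    = \<alpha> + \<gamma> * (\<Sum>i=1..n. \<beta> i * q i)
      + (\<Sum>k<N. \<kappa> k * zonoid_support n a b f (\<lambda>j. prior n q j * ((if j = 0 then 0 else \<beta> j) - s k)))"
proof -
  have "lcx_expect n a b f q \<beta> (\<lambda>t. \<alpha> + \<gamma> * t + (\<Sum>k<N. \<kappa> k * max 0 (t - s k)))
      = lcx_expect n a b f q \<beta> (\<lambda>t. \<alpha> + \<gamma> * t)
        + lcx_expect n a b f q \<beta> (\<lambda>t. \<Sum>k<N. \<kappa> k * max 0 (t - s k))"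
    by (rule lcx_expect_add) (intro continuous_intros)+
  also have "lcx_expect n a b f q \<beta> (\<lambda>t. \<Sum>k<N. \<kappa> k * max 0 (t - s k))
      = (\<Sum>k<N. lcx_expect n a b f q \<beta> (\<lambda>t. \<kappa> k * max 0 (t - s k)))"
    by (rule lcx_expect_sum) (intro continuous_intros)
  finally show ?thesis
    unfolding lcx_expect_cmult lcx_expect_affine lcx_expect_hinge .
qed

lemma lcx_expect_diff_le:
  assumes C1: "continuous_on UNIV C1" and C2: "continuous_on UNIV C2"
    and close: "\<And>t. \<bar>t\<bar> \<le> (\<Sum>i=1..n. \<bar>\<beta> i\<bar>) \<Longrightarrow> \<bar>C1 t - C2 t\<bar> \<le> \<epsilon>"
  shows "\<bar>lcx_expect n a b f q \<beta> C1 - lcx_expect n a b f q \<beta> C2\<bar> \<le> \<epsilon>"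
proof -
  let ?Y = "\<lambda>x. \<Sum>i=1..n. \<beta> i * posterior n f q i x"
  let ?D = "\<lambda>x. (C1 (?Y x) - C2 (?Y x)) * mix n f q x"
  have int: "set_integrable lborel {a..b} ?D"
    using lcx_expect_integrable[OF C1] lcx_expect_integrable[OF C2] by (simp add: left_diff_distrib)
  have diff: "lcx_expect n a b f q \<beta> C1 - lcx_expect n a b f q \<beta> C2 = (LINT x:{a..b}|lborel. ?D x)"
    unfolding lcx_expect_def left_diff_distrib
    using lcx_expect_integrable[OF C1] lcx_expect_integrable[OF C2] by simp
  have bound: "\<bar>?D x\<bar> \<le> \<epsilon> * mix n f q x" if "x \<in> {a..b}" for x
    using close[OF abs_posterior_comb_le[OF that]] mix_nonneg[OF that]
    by (simp add: abs_mult mult_right_mono)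
  have int_mix: "set_integrable lborel {a..b} (\<lambda>x. c * mix n f q x)" for c
    using mix_integrable by simp
  have integral_mix: "(LINT x:{a..b}|lborel. c * mix n f q x) = c" for c
    using mix_integral by simp
  have "?D x \<le> \<epsilon> * mix n f q x" "- \<epsilon> * mix n f q x \<le> ?D x" if "x \<in> {a..b}" for x
    using bound[OF that] by (auto simp: abs_le_iff)
  then have "(LINT x:{a..b}|lborel. ?D x) \<le> (LINT x:{a..b}|lborel. \<epsilon> * mix n f q x)"
    "(LINT x:{a..b}|lborel. - \<epsilon> * mix n f q x) \<le> (LINT x:{a..b}|lborel. ?D x)"
    by (intro set_integral_mono int int_mix; blast)+
  then show ?thesis
    unfolding diff integral_mix by (simp add: abs_le_iff)
qed

end

end

text \<open>Under the uniform prior, the hinge at \<open>- w\<^sub>0\<close> applied to \<open>\<beta> = w - w\<^sub>0\<close> has expectation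
  \<open>\<sigma>(w) / (n + 1)\<close>.\<close>
lemma LB_ge_imp_support_le:
  assumes F: "is_experiment n a b f" and G: "is_experiment n c d g" and LB: "LB_ge n a b f c d g"
  shows "zonoid_support n c d g w \<le> zonoid_support n a b f w"
proof -
  interpret F: density_experiment n a b f by (rule density_experiment.intro) (rule F)
  interpret G: density_experiment n c d g by (rule density_experiment.intro) (rule G)
  define q :: "nat \<Rightarrow> real" where "q = (\<lambda>_. 1 / real (Suc n))"
  define \<beta> where "\<beta> i = w i - w 0" for i
  define s where "s = - w 0"
  have q: "q \<in> prior_set n"
    unfolding prior_set_def q_def by (auto simp: field_simps)
  have "prior n q j = 1 / real (Suc n)" for j
    unfolding prior_def q_def by (auto simp: field_simps)
  then have weights: "(\<lambda>j. prior n q j * ((if j = 0 then 0 else \<beta> j) - s)) = (\<lambda>j. 1 / real (Suc n) * w j)"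
    unfolding \<beta>_def s_def by auto
  have "lcx_expect n c d g q \<beta> (\<lambda>t. max 0 (t - s)) \<le> lcx_expect n a b f q \<beta> (\<lambda>t. max 0 (t - s))"
    using LB q convex_on_hinge unfolding LB_ge_def by blast
  moreover have "0 \<le> 1 / real (Suc n)"
    by simp
  ultimately show ?thesis
    unfolding F.lcx_expect_hinge[OF q] G.lcx_expect_hinge[OF q] weights zonoid_support_scale[OF \<open>0 \<le> _\<close>]
    by (simp add: divide_le_cancel)
qed

lemma support_le_imp_LB_ge:
  assumes F: "is_experiment n a b f" and G: "is_experiment n c d g"
    and support_le: "\<And>w. zonoid_support n c d g w \<le> zonoid_support n a b f w"
  shows "LB_ge n a b f c d g"
  unfolding LB_ge_def
proof (intro ballI allI impI)
  interpret F: density_experiment n a b f by (rule density_experiment.intro) (rule F)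
  interpret G: density_experiment n c d g by (rule density_experiment.intro) (rule G)
  fix q \<beta> :: "nat \<Rightarrow> real" and C :: "real \<Rightarrow> real" assume q: "q \<in> prior_set n" and conv: "convex_on UNIV C"
  let ?B = "\<Sum>i=1..n. \<bar>\<beta> i\<bar>"
  show "lcx_expect n c d g q \<beta> C \<le> lcx_expect n a b f q \<beta> C"
  proof (rule field_le_epsilon)
    fix e :: real assume e: "0 < e"
    have "0 \<le> ?B"
      by (rule sum_nonneg) simp
    then have "-?B - 1 < ?B + 1"
      by linarith
    then obtain \<alpha> \<gamma> N \<kappa> s where \<kappa>: "\<forall>k<(N::nat). 0 \<le> \<kappa> k"
      and approx: "\<forall>t\<in>{-?B-1..?B+1}. \<bar>C t - (\<alpha> + \<gamma> * t + (\<Sum>k<N. \<kappa> k * max 0 (t - s k)))\<bar> \<le> e / 2"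
      using convex_hinge_approx[OF conv _ half_gt_zero[OF e]] by blast
    define P where "P t = \<alpha> + \<gamma> * t + (\<Sum>k<N. \<kappa> k * max 0 (t - s k))" for t
    have C_cont: "continuous_on UNIV C"
      by (rule convex_on_continuous[OF open_UNIV conv])
    have P_cont: "continuous_on UNIV P"
      unfolding P_def by (intro continuous_intros)
    have close: "\<bar>C t - P t\<bar> \<le> e / 2" if "\<bar>t\<bar> \<le> ?B" for t
      using approx that unfolding P_def by (auto simp: abs_le_iff)
    then have close': "\<bar>P t - C t\<bar> \<le> e / 2" if "\<bar>t\<bar> \<le> ?B" for t
      using that by (simp add: abs_minus_commute)
    have "lcx_expect n c d g q \<beta> P \<le> lcx_expect n a b f q \<beta> P"
      unfolding P_def F.lcx_expect_hinge_comb[OF q] G.lcx_expect_hinge_comb[OF q]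
      using \<kappa> support_le by (intro add_left_mono sum_mono mult_left_mono) auto
    moreover have "\<bar>lcx_expect n c d g q \<beta> C - lcx_expect n c d g q \<beta> P\<bar> \<le> e / 2"
      by (rule G.lcx_expect_diff_le[OF q C_cont P_cont]) (rule close)
    moreover have "\<bar>lcx_expect n a b f q \<beta> P - lcx_expect n a b f q \<beta> C\<bar> \<le> e / 2"
      by (rule F.lcx_expect_diff_le[OF q P_cont C_cont]) (rule close')
    ultimately show "lcx_expect n c d g q \<beta> C \<le> lcx_expect n a b f q \<beta> C + e"
      by (simp only: abs_le_iff) linarith
  qed
qed

lemma LB_ge_iff_support_le:
  assumes "is_experiment n a b f" and "is_experiment n c d g"
  shows "LB_ge n a b f c d g \<longleftrightarrow> (\<forall>w. zonoid_support n c d g w \<le> zonoid_support n a b f w)"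
  using LB_ge_imp_support_le[OF assms] support_le_imp_LB_ge[OF assms] by blast

theorem proposition3:
  fixes n :: nat and a b c d :: real and f g :: "nat \<Rightarrow> real \<Rightarrow> real"
  assumes "is_experiment n a b f" and "is_experiment n c d g"
  shows "LB_ge n a b f c d g \<longleftrightarrow> lorenz_zonoid n c d g \<subseteq> lorenz_zonoid n a b f"
  unfolding LB_ge_iff_support_le[OF assms] lorenz_zonoid_subset_iff_support_le[OF assms] ..

end
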